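(* Let $F(V)$ be the set of formulas of $\mathrm{q}\L^{*}$ and define $p\sim q$ iff $\vdash p\leftrightarrow q$ (for $p,q\in F(V)$). Then $\sim$ is a congruence on $F(V)$ with respect to the connectives $\to$, $\neg$, ${}^{+}$ and ${}^{-}$.
   Context: Let $V=\{p_1,p_2,\ldots\}$ be a set of propositional variables and $F(V)$ the set of formulas built from $V$ and the constant $1$ with the binary connective $\to$ and the unary connectives $\neg$, ${}^{+}$, ${}^{-}$ (postfix ${}^+,{}^-$ bind tighter than $\neg$, which binds tighter than $\to$). Abbreviations: $p\vee q:=((p^{+}\to q^{+})^{+}\to(\neg p)^{-})\to((q^{-}\to p^{-})^{-}\to p^{-})$; an axiom written $A\leftrightarrow B$ stands for the two axioms $A\to B$ and $B\to A$, and $\vdash A\leftrightarrow B$ means $\vdash A\to B$ and $\vdash B\to A$. Axiom schemas of $\mathrm{q}\L^{*}$ (for all formulas $p,q,r$): (Q1) $(p\to q)\leftrightarrow(\neg q\to\neg p)$; (Q2) $1\leftrightarrow((1\to p)\to 1)$; (Q3) $p\leftrightarrow((q\to q)\to p)$; (Q4) $(p\to q)\leftrightarrow((q^{+}\to p^{-})\to(p^{+}\to q^{-}))$; (Q5) $\neg(p\to q)\leftrightarrow(q\to p)$; (Q6) $(p\to(\neg p\to q))^{+}\leftrightarrow(p^{+}\to(\neg p^{+}\to q^{+}))$; (Q7) $(p\to(q\vee r))\leftrightarrow((p\to r)\vee(p\to q))$; (Q8) $(p\vee(q\vee r))\leftrightarrow((p\vee q)\vee r)$; (Q9) $((p\to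 1)\to((q\to 1)\to r))\to((q\to 1)\to((p\to 1)\to r))$; (Q10) $p\to 1$; (Q11) $((1\to 1)\to p^{+})\leftrightarrow((p\to 1)\to 1)$ and $((1\to 1)\to p^{-})\leftrightarrow((p\to\neg 1)\to\neg 1)$. Deduction rules: (R1) from $p$ and $p\to q$ infer $(r\to r)\to q$; (R2) from $(r\to r)\to(p\to q)$ infer $p\to q$; (R3) from $p\to q$ and $r\to t$ infer $(q\to r)\to(p\to t)$. A proof of $q_n$ is a finite sequence $q_1,\dots,q_n$ each of which is an axiom or obtained from earlier members by a rule; then $\vdash q_n$. *)

theory Defs
  imports Main
begin

datatype fm =
    Var nat
  | One
  | Imp fm fm
  | Neg fm
  | Pl fm
  | Mi fm

definition Disj :: "fm \<Rightarrow> fm \<Rightarrow> fm" where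
  "Disj p q = Imp (Imp (Pl (Imp (Pl p) (Pl q))) (Mi (Neg p)))
                  (Imp (Mi (Imp (Mi q) (Mi p))) (Mi p))"

text \<open>Axiom schemas (Q1)--(Q11); each A \<leftrightarrow> B stands for A \<rightarrow> B and B \<rightarrow> A.\<close>

inductive axiom :: "fm \<Rightarrow> bool" where
  Q1a: "axiom (Imp (Imp p q) (Imp (Neg q) (Neg p)))"
| Q1b: "axiom (Imp (Imp (Neg q) (Neg p)) (Imp p q))"
| Q2a: "axiom (Imp One (Imp (Imp One p) One))"
| Q2b: "axiom (Imp (Imp (Imp One p) One) One)"
| Q3a: "axiom (Imp p (Imp (Imp q q) p))"
| Q3b: "axiom (Imp (Imp (Imp q q) p) p)"
| Q4a: "axiom (Imp (Imp p q) (Imp (Imp (Pl q) (Mi p)) (Imp (Pl p) (Mi q))))"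
| Q4b: "axiom (Imp (Imp (Imp (Pl q) (Mi p)) (Imp (Pl p) (Mi q))) (Imp p q))"
| Q5a: "axiom (Imp (Neg (Imp p q)) (Imp q p))"
| Q5b: "axiom (Imp (Imp q p) (Neg (Imp p q)))"
| Q6a: "axiom (Imp (Pl (Imp p (Imp (Neg p) q))) (Imp (Pl p) (Imp (Neg (Pl p)) (Pl q))))"
| Q6b: "axiom (Imp (Imp (Pl p) (Imp (Neg (Pl p)) (Pl q))) (Pl (Imp p (Imp (Neg p) q))))"
| Q7a: "axiom (Imp (Imp p (Disj q r)) (Disj (Imp p r) (Imp p q)))"
| Q7b: "axiom (Imp (Disj (Imp p r) (Imp p q)) (Imp p (Disj q r)))"
| Q8a: "axiom (Imp (Disj p (Disj q r)) (Disj (Disj p q) r))"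
| Q8b: "axiom (Imp (Disj (Disj p q) r) (Disj p (Disj q r)))"
| Q9: "axiom (Imp (Imp (Imp p One) (Imp (Imp q One) r))
                   (Imp (Imp q One) (Imp (Imp p One) r)))"
| Q10: "axiom (Imp p One)"
| Q11a: "axiom (Imp (Imp (Imp One One) (Pl p)) (Imp (Imp p One) One))"
| Q11b: "axiom (Imp (Imp (Imp p One) One) (Imp (Imp One One) (Pl p)))"
| Q11c: "axiom (Imp (Imp (Imp One One) (Mi p)) (Imp (Imp p (Neg One)) (Neg One)))"
| Q11d: "axiom (Imp (Imp (Imp p (Neg One)) (Neg One)) (Imp (Imp One One) (Mi p)))"

inductive prov :: "fm \<Rightarrow> bool" where
  ax: "axiom p \<Longrightarrow> prov p"
| R1: "prov p \<Longrightarrow> prov (Imp p q) \<Longrightarrow> prov (Imp (Imp r r) q)"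
| R2: "prov (Imp (Imp r r) (Imp p q)) \<Longrightarrow> prov (Imp p q)"
| R3: "prov (Imp p q) \<Longrightarrow> prov (Imp r t) \<Longrightarrow> prov (Imp (Imp q r) (Imp p t))"

definition equivfm :: "fm \<Rightarrow> fm \<Rightarrow> bool" where
  "equivfm p q \<longleftrightarrow> prov (Imp p q) \<and> prov (Imp q p)"

end

theory Submission
  imports Defs
begin

text \<open>Reflexivity and transitivity of \<open>\<turnstile> p \<rightarrow> q\<close> come from (Q3) and from (R3) followed
  by (R2); (R3) is also exactly the congruence property for \<open>\<rightarrow>\<close>. Negation is handled by
  (Q1) and modus ponens. Finally (Q11) and (Q3) identify \<open>p\<^sup>+\<close> with \<open>(p \<rightarrow> 1) \<rightarrow> 1\<close> and
  \<open>p\<^sup>-\<close> with \<open>(p \<rightarrow> \<not>1) \<rightarrow> \<not>1\<close>, which reduces these two connectives to \<open>\<rightarrow>\<close>.\<close>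

text \<open>(R1) only yields \<open>(r \<rightarrow> r) \<rightarrow> q\<close>; when \<open>q\<close> is itself an implication, (R2) strips the prefix.\<close>

lemma prov_mp_Imp: "prov p \<Longrightarrow> prov (Imp p (Imp a b)) \<Longrightarrow> prov (Imp a b)"
  using prov.R1[of p "Imp a b" One] prov.R2[of One a b] by blast

lemma prov_Imp_trans: "prov (Imp a b) \<Longrightarrow> prov (Imp b c) \<Longrightarrow> prov (Imp a c)"
  using prov.R3[of a b b c] prov.R2[of b a c] by blast

lemma equivfm_axiomI: "axiom (Imp a b) \<Longrightarrow> axiom (Imp b a) \<Longrightarrow> equivfm a b"
  unfolding equivfm_def by (blast intro: prov.ax)

lemma equivfm_Imp_refl_One: "equivfm p (Imp (Imp One One) p)"
  by (intro equivfm_axiomI axiom.Q3a axiom.Q3b)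

lemma equivfm_refl: "equivfm p p"
  using equivfm_Imp_refl_One[of p] unfolding equivfm_def by (blast intro: prov_Imp_trans)

lemma equivfm_sym: "equivfm p q \<Longrightarrow> equivfm q p"
  unfolding equivfm_def by blast

lemma equivfm_trans: "equivfm p q \<Longrightarrow> equivfm q r \<Longrightarrow> equivfm p r"
  unfolding equivfm_def by (blast intro: prov_Imp_trans)

lemma equivp_equivfm: "equivp equivfm"
  by (blast intro: equivpI reflpI sympI transpI equivfm_refl equivfm_sym equivfm_trans)

lemma equivfm_Imp: "equivfm p p' \<Longrightarrow> equivfm q q' \<Longrightarrow> equivfm (Imp p q) (Imp p' q')"
  unfolding equivfm_def by (blast intro: prov.R3)

lemma equivfm_Neg: "equivfm p q \<Longrightarrow> equivfm (Neg p) (Neg q)"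
  unfolding equivfm_def
  using prov_mp_Imp[OF _ prov.ax[OF axiom.Q1a[of p q]]] prov_mp_Imp[OF _ prov.ax[OF axiom.Q1a[of q p]]]
  by blast

lemma equivfm_Pl_Imp_One: "equivfm (Pl p) (Imp (Imp p One) One)"
  using equivfm_Imp_refl_One[of "Pl p"] equivfm_axiomI[OF axiom.Q11a axiom.Q11b]
  by (rule equivfm_trans)

lemma equivfm_Mi_Imp_Neg_One: "equivfm (Mi p) (Imp (Imp p (Neg One)) (Neg One))"
  using equivfm_Imp_refl_One[of "Mi p"] equivfm_axiomI[OF axiom.Q11c axiom.Q11d]
  by (rule equivfm_trans)

lemma equivfm_Pl: "equivfm p q \<Longrightarrow> equivfm (Pl p) (Pl q)"
  using equivfm_Imp[OF equivfm_Imp[OF _ equivfm_refl] equivfm_refl, of p q One One]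
    equivfm_Pl_Imp_One[of p] equivfm_Pl_Imp_One[of q]
  by (blast intro: equivfm_trans equivfm_sym)

lemma equivfm_Mi: "equivfm p q \<Longrightarrow> equivfm (Mi p) (Mi q)"
  using equivfm_Imp[OF equivfm_Imp[OF _ equivfm_refl] equivfm_refl, of p q "Neg One" "Neg One"]
    equivfm_Mi_Imp_Neg_One[of p] equivfm_Mi_Imp_Neg_One[of q]
  by (blast intro: equivfm_trans equivfm_sym)

theorem proposition5p2:
  shows "equiv UNIV {(p, q). equivfm p q}
    \<and> (\<forall>p q p' q'. equivfm p p' \<and> equivfm q q' \<longrightarrow> equivfm (Imp p q) (Imp p' q'))
    \<and> (\<forall>p q. equivfm p q \<longrightarrow> equivfm (Neg p) (Neg q))
    \<and> (\<forall>p q. equivfm p q \<longrightarrow> equivfm (Pl p) (Pl q))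
    \<and> (\<forall>p q. equivfm p q \<longrightarrow> equivfm (Mi p) (Mi q))"
  using equivp_equivfm equivfm_Imp equivfm_Neg equivfm_Pl equivfm_Mi
  by (simp add: equivp_equiv)

end
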